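(* Let $n\ge 2$, $r>0$, $m\ge 1$, and let $g$ be polyharmonic of degree $m$ (harmonic if $m=1$), i.e. $g\in C^{2m}$ and $\Delta^m g=0$, in a domain of $\mathbb{R}^n$ containing $I_n=\{\bm{x}\in\mathbb{R}^n: |x_i|\le r,\ i=1,\dots,n\}$. Let $\varphi\in C^{2m}[0,r]$ satisfy $\varphi^{(k)}(0)=0$ for $k=0,1,\dots,2m-1$. Then, with $M(\bm{x})=\max_{1\le i\le n}|x_i|$, $$\int_{I_n}\varphi^{(2m)}(r-M)\,g\,d\lambda_n=2\sum_{s=0}^{m-1}\int_{D_n}\varphi^{(2s+1)}(r-M)\,\Delta^{m-s-1}g\,d\lambda_{n-1}.$$
   Context: $\Delta$ is the Laplacian and $\Delta^m$ its $m$-th iterate ($\Delta^0 g=g$); $\varphi^{(j)}$ is the $j$-th derivative of $\varphi$; $\lambda_n$ is Lebesgue measure on $\mathbb{R}^n$. For $1\le i<j\le n$, $D^{ij}_n=\{\bm{x}\in I_n : |x_k|\le |x_i|=|x_j| \text{ for all } k\ne i,j\}$, and $D_n=\bigcup_{1\le i<j\le n}D^{ij}_n$. On $D_n$, $\lambda_{n-1}$ denotes the measure obtained on each piece $D^{ij}_n$ by parametrizing it by the coordinates other than $x_i$ and taking $(n-1)$-dimensional Lebesgue measure in those coordinates (equivalently, $1/\sqrt2$ times the $(n-1)$-dimensional surface measure). *)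

theory Defs
  imports "HOL-Analysis.Analysis"
begin

definition partial :: "'n::finite \<Rightarrow> (real^'n \<Rightarrow> real) \<Rightarrow> real^'n \<Rightarrow> real" where
  "partial i f x = deriv (\<lambda>t. f (x + t *\<^sub>R axis i 1)) 0"

primrec Ck :: "nat \<Rightarrow> (real^'n::finite \<Rightarrow> real) \<Rightarrow> (real^'n) set \<Rightarrow> bool" where
  "Ck 0 f U = continuous_on U f"
| "Ck (Suc k) f U =
     (continuous_on U f \<and>
      (\<forall>i. \<forall>x\<in>U. (\<lambda>t. f (x + t *\<^sub>R axis i 1)) differentiable (at 0)) \<and>
      (\<forall>i. Ck k (partial i f) U))"

definition laplacian :: "(real^'n::finite \<Rightarrow> real) \<Rightarrow> real^'n \<Rightarrow> real" where
  "laplacian f = (\<lambda>x. \<Sum>i\<in>UNIV. partial i (partial i f) x)"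

definition Icube :: "real \<Rightarrow> (real^'n::finite) set" where
  "Icube r = {x. \<forall>i. \<bar>x$i\<bar> \<le> r}"

definition Mx :: "real^'n::finite \<Rightarrow> real" where
  "Mx x = Max (range (\<lambda>i. \<bar>x$i\<bar>))"

definition Dij :: "real \<Rightarrow> 'n::finite \<Rightarrow> 'n \<Rightarrow> (real^'n) set" where
  "Dij r i j = {x \<in> Icube r. \<bar>x$i\<bar> = \<bar>x$j\<bar> \<and> (\<forall>k. k \<noteq> i \<and> k \<noteq> j \<longrightarrow> \<bar>x$k\<bar> \<le> \<bar>x$i\<bar>)}"

definition lebesgue_minus :: "'n::finite \<Rightarrow> ('n \<Rightarrow> real) measure" where
  "lebesgue_minus i = PiM (UNIV - {i}) (\<lambda>_. lborel)"

text \<open>Point of the sheet x_i = \<sigma> x_j of D^{ij} with coordinates y (other than x_i).\<close>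
definition lift :: "'n::finite \<Rightarrow> 'n \<Rightarrow> real \<Rightarrow> ('n \<Rightarrow> real) \<Rightarrow> real^'n" where
  "lift i j \<sigma> y = (\<chi> k. if k = i then \<sigma> * y j else y k)"

text \<open>Integral over D^{ij}_n w.r.t. lambda_{n-1}: parametrized by the coordinates other than x_i;
  D^{ij} consists of the two sheets x_i = x_j and x_i = -x_j.\<close>
definition integral_Dij :: "real \<Rightarrow> 'n::finite \<Rightarrow> 'n \<Rightarrow> (real^'n \<Rightarrow> real) \<Rightarrow> real" where
  "integral_Dij r i j h =
     (\<Sum>\<sigma>\<in>{-1, 1::real}.
        set_lebesgue_integral (lebesgue_minus i)
          {y \<in> space (lebesgue_minus i). lift i j \<sigma> y \<in> Dij r i j}
          (\<lambda>y. h (lift i j \<sigma> y)))"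

text \<open>Integral over D_n = union of D^{ij}_n, i<j (the pieces overlap only in null sets).\<close>
definition integral_Dn :: "real \<Rightarrow> (real^'n::{finite,linorder} \<Rightarrow> real) \<Rightarrow> real" where
  "integral_Dn r h = (\<Sum>i\<in>UNIV. \<Sum>j\<in>{j. i < j}. integral_Dij r i j h)"

end

theory Submission
  imports Defs
begin

text \<open>
  Fix a coordinate \<open>k\<close> and integrate \<open>\<psi>(r - M) \<partial>\<^sub>k\<^sup>2h\<close> along the lines parallel to the \<open>k\<close>-th
  axis. With \<open>a = max\<^sub>l\<^sub>\<noteq>\<^sub>k \<bar>x\<^sub>l\<bar>\<close> fixed on such a line, the weight is \<open>\<psi>(r - max \<bar>t\<bar> a)\<close>: constant for
  \<open>\<bar>t\<bar> \<le> a\<close> and \<open>\<psi>(r - \<bar>t\<bar>)\<close> beyond. Integrating by parts twice (\<open>\<psi>(0) = \<psi>'(0) = 0\<close> removes the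
  terms at \<open>\<bar>t\<bar> = r\<close>) gives \<open>\<integral>\<^bsub>\<bar>t\<bar>>a\<^esub> \<psi>''(r - \<bar>t\<bar>) h - \<psi>'(r - a) (h(a) + h(-a))\<close>.
  The regions \<open>\<bar>t\<bar> > a\<close> are the cones where \<open>\<bar>x\<^sub>k\<bar>\<close> is the strict maximum, which tile the cube up to a
  null set, while the points \<open>t = \<plusminus>a\<close> sweep out \<open>D\<^sub>n\<close>, each \<open>D\<^sup>i\<^sup>j\<close> being seen from both directions
  \<open>i\<close> and \<open>j\<close>. Summing over \<open>k\<close> yields the Green-type identity
  \<open>\<integral> \<psi>''(r - M) h = \<integral> \<psi>(r - M) \<Delta>h + 2 \<integral>\<^bsub>D\<^sub>n\<^esub> \<psi>'(r - M) h\<close>; applying it with \<open>\<psi> = \<phi>\<^sup>(\<^sup>2\<^sup>s\<^sup>)\<close> and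
  \<open>h = \<Delta>\<^sup>m\<^sup>-\<^sup>s\<^sup>-\<^sup>1 g\<close> for \<open>s = m - 1, \<dots>, 0\<close> telescopes to the theorem, as \<open>\<Delta>\<^sup>m g = 0\<close>.
\<close>

section \<open>Lebesgue measure on \<open>real^'n\<close> as a product measure\<close>

lemma measurable_vec_lambda[measurable]:
  assumes "\<And>l. (\<lambda>x. f x l) \<in> borel_measurable M"
  shows "(\<lambda>x. vec_lambda (f x) :: real^'n::finite) \<in> borel_measurable M"
proof (subst borel_measurable_euclidean_space, intro ballI)
  fix b :: "real^'n" assume "b \<in> Basis"
  then obtain i where b: "b = axis i 1" by (auto simp: Basis_vec_def)
  show "(\<lambda>x. vec_lambda (f x) \<bullet> b) \<in> borel_measurable M"
    using assms[of i] by (simp add: b inner_axis)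
qed

lemma lborel_vec_eq_distr_PiM:
  "(lborel :: (real^'n::finite) measure) = distr (PiM UNIV (\<lambda>_::'n. lborel)) borel vec_lambda"
proof (rule lborel_eqI)
  interpret product_sigma_finite "\<lambda>_::'n. lborel :: real measure" by standard
  fix l u :: "real^'n" assume lu: "\<And>b. b \<in> Basis \<Longrightarrow> l \<bullet> b \<le> u \<bullet> b"
  have lu': "l$i \<le> u$i" for i using lu[of "axis i 1"] by (auto simp: Basis_vec_def inner_axis)
  have vm: "(vec_lambda :: _ \<Rightarrow> real^'n) \<in> PiM UNIV (\<lambda>_. lborel) \<rightarrow>\<^sub>M borel"
    by (rule measurable_vec_lambda[where f="\<lambda>x. x"]) simp
  have "vec_lambda -` box l u \<inter> space (PiM UNIV (\<lambda>_::'n. lborel)) = PiE UNIV (\<lambda>i. {l$i<..<u$i})"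
    by (auto simp: mem_box_cart space_PiM PiE_def Pi_def extensional_def)
  then have "emeasure (distr (PiM UNIV (\<lambda>_::'n. lborel)) borel vec_lambda) (box l u)
      = (\<Prod>i\<in>UNIV. emeasure lborel {l$i<..<u$i})"
    using vm by (simp add: emeasure_distr emeasure_PiM)
  also have "\<dots> = ennreal (\<Prod>i\<in>UNIV. u$i - l$i)"
    using lu' by (simp add: prod_ennreal)
  also have "(\<Prod>i\<in>UNIV. u$i - l$i) = (\<Prod>b\<in>Basis. (u - l) \<bullet> b)"
  proof -
    have B: "(Basis :: (real^'n) set) = range (\<lambda>i. axis i 1)" by (auto simp: Basis_vec_def)
    show ?thesis unfolding B by (subst prod.reindex) (auto simp: inj_on_def axis_eq_axis inner_axis)
  qed
  finally show "emeasure (distr (PiM UNIV (\<lambda>_::'n. lborel)) borel vec_lambda) (box l u)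
      = (\<Prod>b\<in>Basis. (u - l) \<bullet> b)" .
qed simp

lemma (in product_sigma_finite) product_integrable_insert:
  fixes f :: "_ \<Rightarrow> real"
  assumes I: "finite I" "i \<notin> I"
    and f: "integrable (Pi\<^sub>M (insert i I) M) f"
  shows "integrable (Pi\<^sub>M I M) (\<lambda>x. \<integral>y. f (x(i:=y)) \<partial>M i)"
proof -
  interpret I: finite_product_sigma_finite M I by standard fact
  interpret J: finite_product_sigma_finite M "{i}" by standard simp
  interpret P: pair_sigma_finite "Pi\<^sub>M I M" "Pi\<^sub>M {i} M" ..
  have IJ: "I \<inter> {i} = {}" using I by auto
  have f': "integrable (Pi\<^sub>M (I \<union> {i}) M) f" using f by simp
  have merge: "distr (Pi\<^sub>M I M \<Otimes>\<^sub>M Pi\<^sub>M {i} M) (Pi\<^sub>M (I \<union> {i}) M) (merge I {i}) = Pi\<^sub>M (I \<union> {i}) M"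
    by (rule distr_merge[OF IJ I(1)]) simp
  have f_merge: "integrable (Pi\<^sub>M I M \<Otimes>\<^sub>M Pi\<^sub>M {i} M) (\<lambda>x. f (merge I {i} x))"
    by (rule integrable_distr[OF measurable_merge]) (subst merge, rule f')
  have int1: "integrable (Pi\<^sub>M I M) (\<lambda>x. \<integral>y. f (merge I {i} (x,y)) \<partial>Pi\<^sub>M {i} M)"
    using P.integrable_fst'[OF f_merge] by simp
  have eq: "(\<integral>y. f (merge I {i} (x,y)) \<partial>Pi\<^sub>M {i} M) = (\<integral>y. f (x(i := y)) \<partial>M i)"
    if x: "x \<in> space (Pi\<^sub>M I M)" for x
  proof -
    have m: "(\<lambda>y. f (x(i := y))) \<in> borel_measurable (M i)"
      using measurable_comp[OF measurable_component_update borel_measurable_integrable[OF f], OF x I(2)]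
      unfolding comp_def .
    have "(\<integral>y. f (merge I {i} (x,y)) \<partial>Pi\<^sub>M {i} M) = (\<integral>y. f (x(i := y i)) \<partial>Pi\<^sub>M {i} M)"
      using x I by (intro Bochner_Integration.integral_cong refl arg_cong[where f=f])
        (auto simp: merge_def space_PiM extensional_def PiE_def fun_eq_iff)
    also have "\<dots> = (\<integral>y. f (x(i := y)) \<partial>M i)"
      using product_integral_singleton[OF m] .
    finally show ?thesis .
  qed
  show ?thesis
    using Bochner_Integration.integrable_cong[OF refl, of "Pi\<^sub>M I M", OF eq] int1 by simp
qed

lemma lborel_integral_by_coordinate:
  fixes F :: "real^'n::finite \<Rightarrow> real"
  assumes "integrable lborel F"
  shows "integral\<^sup>L lborel F = (\<integral>y. (\<integral>t. F (vec_lambda (y(k:=t))) \<partial>lborel) \<partial>lebesgue_minus k)"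
    and "integrable (lebesgue_minus k) (\<lambda>y. \<integral>t. F (vec_lambda (y(k:=t))) \<partial>lborel)"
proof -
  interpret product_sigma_finite "\<lambda>_::'n. lborel :: real measure" by standard
  have Fm: "F \<in> borel_measurable borel" using assms by simp
  have UNIV_eq: "(UNIV::'n set) = insert k (UNIV - {k})" by auto
  have "integrable (PiM UNIV (\<lambda>_. lborel)) (\<lambda>y. F (vec_lambda y))"
    using assms by (subst (asm) lborel_vec_eq_distr_PiM) (simp add: integrable_distr_eq Fm)
  then have int: "integrable (PiM (insert k (UNIV - {k})) (\<lambda>_. lborel)) (\<lambda>y. F (vec_lambda y))"
    by (simp flip: UNIV_eq)
  have "integral\<^sup>L lborel F = integral\<^sup>L (PiM (insert k (UNIV - {k})) (\<lambda>_. lborel)) (\<lambda>y. F (vec_lambda y))"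
    by (subst lborel_vec_eq_distr_PiM) (simp add: integral_distr Fm flip: UNIV_eq)
  also have "\<dots> = (\<integral>y. (\<integral>t. F (vec_lambda (y(k:=t))) \<partial>lborel) \<partial>lebesgue_minus k)"
    unfolding lebesgue_minus_def by (rule product_integral_insert[OF _ _ int]) auto
  finally show "integral\<^sup>L lborel F = (\<integral>y. (\<integral>t. F (vec_lambda (y(k:=t))) \<partial>lborel) \<partial>lebesgue_minus k)" .
  show "integrable (lebesgue_minus k) (\<lambda>y. \<integral>t. F (vec_lambda (y(k:=t))) \<partial>lborel)"
    unfolding lebesgue_minus_def by (rule product_integrable_insert[OF _ _ int]) auto
qed

lemma AE_PiM_abs_neq:
  assumes I: "finite I" "j \<in> I" "l \<in> I" "j \<noteq> l"
  shows "AE y in PiM I (\<lambda>_. lborel :: real measure). \<bar>y j\<bar> \<noteq> \<bar>y l\<bar>"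
proof -
  interpret product_sigma_finite "\<lambda>_::'a. lborel :: real measure" by standard
  define N where "N = {y \<in> space (PiM I (\<lambda>_. lborel :: real measure)). \<bar>y j\<bar> = \<bar>y l\<bar>}"
  have N[measurable]: "N \<in> sets (PiM I (\<lambda>_. lborel))"
    unfolding N_def using I by measurable
  have I_eq: "I = insert j (I - {j})" using I by auto
  have "emeasure (PiM I (\<lambda>_. lborel)) N = (\<integral>\<^sup>+ y. indicator N y \<partial>PiM (insert j (I - {j})) (\<lambda>_. lborel))"
    using I_eq by (metis N nn_integral_indicator)
  also have "\<dots> = (\<integral>\<^sup>+ x. (\<integral>\<^sup>+ t. indicator N (x(j := t)) \<partial>lborel) \<partial>PiM (I - {j}) (\<lambda>_. lborel))"
  proof (rule product_nn_integral_insert)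
    show "indicator N \<in> borel_measurable (PiM (insert j (I - {j})) (\<lambda>_. lborel))"
      by (subst I_eq[symmetric]) simp
  qed (use I in auto)
  also have "\<dots> = (\<integral>\<^sup>+ x. 0 \<partial>PiM (I - {j}) (\<lambda>_. lborel :: real measure))"
  proof (rule nn_integral_cong)
    fix x assume "x \<in> space (PiM (I - {j}) (\<lambda>_. lborel :: real measure))"
    then have "x(j := t) \<in> space (PiM I (\<lambda>_. lborel))" for t
      using I by (auto simp: space_PiM PiE_def extensional_def)
    \<comment> \<open>on the line through \<open>x\<close> in direction \<open>j\<close>, \<open>N\<close> consists of the two points \<open>t = \<plusminus>x l\<close>\<close>
    then have "(\<integral>\<^sup>+ t. indicator N (x(j := t)) \<partial>lborel) = (\<integral>\<^sup>+ t. indicator {x l, - x l} t \<partial>lborel)"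
      using I(4) by (intro nn_integral_cong) (auto simp: N_def indicator_def abs_eq_iff)
    also have "\<dots> = 0"
      using null_setsD1[OF finite_imp_null_set_lborel[of "{x l, - x l}"]] by simp
    finally show "(\<integral>\<^sup>+ t. indicator N (x(j := t)) \<partial>lborel) = 0" .
  qed
  finally have "N \<in> null_sets (PiM I (\<lambda>_. lborel))" by auto
  then show ?thesis by (rule AE_I') (auto simp: N_def)
qed

lemma AE_PiM_abs_distinct:
  assumes "finite I"
  shows "AE y in PiM I (\<lambda>_. lborel :: real measure). \<forall>a\<in>I. \<forall>b\<in>I. a \<noteq> b \<longrightarrow> \<bar>y a\<bar> \<noteq> \<bar>y b\<bar>"
proof (intro AE_finite_allI assms)
  fix a b assume "a \<in> I" "b \<in> I"
  then show "AE y in PiM I (\<lambda>_. lborel :: real measure). a \<noteq> b \<longrightarrow> \<bar>y a\<bar> \<noteq> \<bar>y b\<bar>"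
    using AE_PiM_abs_neq[OF assms, of a b] by (cases "a = b") auto
qed

lemma AE_lborel_abs_distinct:
  "AE x in (lborel :: (real^'n::finite) measure). \<forall>a b. a \<noteq> b \<longrightarrow> \<bar>x$a\<bar> \<noteq> \<bar>x$b\<bar>"
proof -
  have "AE y in PiM UNIV (\<lambda>_. lborel). \<forall>a b. a \<noteq> b \<longrightarrow> \<bar>(vec_lambda y :: real^'n) $ a\<bar> \<noteq> \<bar>vec_lambda y $ b\<bar>"
    using AE_PiM_abs_distinct[of "UNIV :: 'n set"] by simp
  then show ?thesis
    by (subst lborel_vec_eq_distr_PiM, subst AE_distr_iff) auto
qed

lemma differentiable_at_iff_field_differentiable_real:
  "(f::real\<Rightarrow>real) differentiable at x \<longleftrightarrow> f field_differentiable at x"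
  using DERIV_deriv_iff_real_differentiable DERIV_deriv_iff_field_differentiable by blast

lemma eventually_nhds_line_in_open:
  fixes x :: "real^'n::finite"
  assumes "open U" "x \<in> U"
  shows "eventually (\<lambda>t. x + t *\<^sub>R axis i 1 \<in> U) (nhds 0)"
proof -
  obtain d where d: "d > 0" "ball x d \<subseteq> U" using assms openE by blast
  have "x + t *\<^sub>R axis i 1 \<in> U" if "dist t 0 < d" for t :: real
    using that d by (auto simp: dist_norm)
  then show ?thesis using d(1) unfolding eventually_nhds_metric by blast
qed

lemma Ck_cong:
  assumes "open U" "\<And>x. x \<in> U \<Longrightarrow> f x = g x" "Ck k f U"
  shows "Ck k g U"
  using assms(2,3)
proof (induction k arbitrary: f g)
  case 0 then show ?case using continuous_on_cong by fastforce
next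
  case (Suc k)
  have ev: "eventually (\<lambda>t. f (x + t *\<^sub>R axis i 1) = g (x + t *\<^sub>R axis i 1)) (nhds 0)"
    if "x \<in> U" for x i
    using eventually_nhds_line_in_open[OF assms(1) that, of i] Suc.prems(1) by (auto elim: eventually_mono)
  have "(\<lambda>t. g (x + t *\<^sub>R axis i 1)) differentiable (at 0)" if x: "x \<in> U" for i x
  proof -
    have "(\<lambda>t. f (x + t *\<^sub>R axis i 1)) field_differentiable (at 0)"
      using Suc.prems(2) x by (simp add: differentiable_at_iff_field_differentiable_real)
    then obtain D where "((\<lambda>t. f (x + t *\<^sub>R axis i 1)) has_field_derivative D) (at 0)"
      unfolding field_differentiable_def by blast
    then have "((\<lambda>t. g (x + t *\<^sub>R axis i 1)) has_field_derivative D) (at 0)"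
      using DERIV_cong_ev[OF refl ev[OF x, of i] refl] by blast
    then show ?thesis
      by (auto simp: differentiable_at_iff_field_differentiable_real field_differentiable_def)
  qed
  moreover have "partial i f x = partial i g x" if "x \<in> U" for i x
    unfolding partial_def using ev[OF that] by (auto intro!: deriv_cong_ev)
  then have "Ck k (partial i g) U" for i
    using Suc.IH[of "partial i f" "partial i g"] Suc.prems(2) by simp
  ultimately show ?case using Suc.prems continuous_on_cong by force
qed

lemma Ck_mono: "k \<le> l \<Longrightarrow> Ck l f U \<Longrightarrow> Ck k f U"
proof (induction l arbitrary: k f)
  case (Suc l)
  show ?case
  proof (cases k)
    case (Suc k')
    then have "Ck k' (partial i f) U" for i
      using Suc.IH[of k' "partial i f"] Suc.prems by simp
    then show ?thesis using Suc.prems \<open>k = Suc k'\<close> by simp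
  qed (use Suc.prems in simp)
qed simp

lemma Ck_zero: "Ck k (\<lambda>x. 0) U"
proof (induction k)
  case (Suc k)
  have "partial i (\<lambda>x. 0::real) = (\<lambda>x. 0)" for i :: 'a
    by (simp add: partial_def fun_eq_iff)
  then show ?case using Suc by simp
qed simp

lemma Ck_add:
  assumes "open U" "Ck k f U" "Ck k g U"
  shows "Ck k (\<lambda>x. f x + g x) U"
  using assms(2,3)
proof (induction k arbitrary: f g)
  case 0 then show ?case by (auto intro: continuous_intros)
next
  case (Suc k)
  have partial_add: "partial i f x + partial i g x = partial i (\<lambda>x. f x + g x) x" if "x \<in> U" for i x
  proof -
    have "(\<lambda>t. f (x + t *\<^sub>R axis i 1)) field_differentiable (at 0)"
      "(\<lambda>t. g (x + t *\<^sub>R axis i 1)) field_differentiable (at 0)"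
      using Suc.prems that by (auto simp: differentiable_at_iff_field_differentiable_real[symmetric])
    then show ?thesis unfolding partial_def by simp
  qed
  have "Ck k (partial i (\<lambda>x. f x + g x)) U" for i
  proof (rule Ck_cong[OF assms(1) partial_add])
    show "Ck k (\<lambda>x. partial i f x + partial i g x) U" using Suc.IH Suc.prems by simp
  qed
  then show ?case using Suc.prems by (auto intro: continuous_intros differentiable_add)
qed

lemma Ck_sum:
  assumes "open U" "finite S" "\<And>l. l \<in> S \<Longrightarrow> Ck k (f l) U"
  shows "Ck k (\<lambda>x. \<Sum>l\<in>S. f l x) U"
  using assms(2,3)
proof (induction S rule: finite_induct)
  case empty then show ?case by (simp add: Ck_zero)
next
  case (insert a S)
  then show ?case using Ck_add[OF assms(1), of k "f a" "\<lambda>x. \<Sum>l\<in>S. f l x"] by simp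
qed

lemma Ck_laplacian:
  assumes "open U" "Ck (Suc (Suc k)) f U"
  shows "Ck k (laplacian f) U"
  unfolding laplacian_def by (rule Ck_sum[OF assms(1)]) (use assms(2) in auto)

lemma Ck_laplacian_funpow:
  assumes "open U" "Ck (2*m) g U" "s \<le> m"
  shows "Ck (2*(m-s)) ((laplacian ^^ s) g) U"
  using assms(3)
proof (induction s)
  case 0 then show ?case using assms by simp
next
  case (Suc s)
  have "2*(m-s) = Suc (Suc (2*(m - Suc s)))" using Suc.prems by simp
  then show ?case using Ck_laplacian[OF assms(1)] Suc by simp
qed

lemma Ck_2_continuous_on:
  assumes "Ck 2 h U"
  shows "continuous_on U h" "continuous_on U (partial k (partial k h))"
  using assms by (simp_all add: numeral_2_eq_2)

lemma has_real_derivative_partial_line: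
  assumes "\<forall>x\<in>U. (\<lambda>t. f (x + t *\<^sub>R axis i 1)) differentiable (at 0)"
    and "p + t0 *\<^sub>R axis i 1 \<in> U"
  shows "((\<lambda>t. f (p + t *\<^sub>R axis i 1)) has_real_derivative partial i f (p + t0 *\<^sub>R axis i 1)) (at t0)"
proof -
  define q where "q = p + t0 *\<^sub>R axis i 1"
  define g where "g = (\<lambda>s. f (q + s *\<^sub>R axis i 1))"
  have "g differentiable (at 0)" using assms unfolding g_def q_def by blast
  then have "(g has_real_derivative partial i f q) (at (t0 - t0))"
    unfolding partial_def g_def[symmetric] by (simp add: DERIV_deriv_iff_real_differentiable)
  then have "((\<lambda>t. g (t - t0)) has_real_derivative partial i f q * 1) (at t0)"
    by (intro DERIV_chain2[where f=g]) (auto intro!: derivative_eq_intros)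
  moreover have "g (t - t0) = f (p + t *\<^sub>R axis i 1)" for t
    by (simp add: g_def q_def algebra_simps)
  ultimately show ?thesis by (simp add: q_def)
qed

lemma Icube_eq_cbox: "Icube r = cbox (\<chi> i. -r) (\<chi> i. r :: real^'n::finite)"
  by (auto simp: Icube_def mem_box_cart abs_le_iff) (smt (verit))+

lemma compact_Icube: "compact (Icube r)"
  by (simp add: Icube_eq_cbox)

lemma Icube_sets[measurable]: "Icube r \<in> sets borel"
  by (simp add: Icube_eq_cbox)

lemma Dij_sets[measurable]: "Dij r i j \<in> sets borel"
  unfolding Dij_def by measurable

lemma Dij_subset_Icube: "Dij r i j \<subseteq> Icube r"
  by (auto simp: Dij_def)

lemma Dij_commute: "Dij r j i = Dij r i j"
  by (auto simp: Dij_def)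

lemma Mx_eq_infnorm: "Mx x = infnorm x"
proof -
  have "{\<bar>x$i\<bar> |i. i\<in>UNIV} = range (\<lambda>i. \<bar>x$i\<bar>)" by auto
  then show ?thesis unfolding Mx_def infnorm_cart by (simp add: cSup_eq_Max)
qed

lemma continuous_on_Mx: "continuous_on S Mx"
  unfolding Mx_eq_infnorm[abs_def] by (intro continuous_intros)

lemma abs_le_Mx: "\<bar>x$i\<bar> \<le> Mx x"
  unfolding Mx_def by (rule Max_ge) auto

lemma Mx_in_Icube:
  assumes "x \<in> Icube r" shows "0 \<le> Mx x" "Mx x \<le> r"
proof -
  show "0 \<le> Mx x" using abs_le_Mx[of x undefined] by linarith
  show "Mx x \<le> r" using assms unfolding Mx_def Icube_def by (auto simp: Max_le_iff)
qed

lemma continuous_on_Icube_radial: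
  fixes \<psi> :: "real \<Rightarrow> real" and q :: "real^'n::finite \<Rightarrow> real"
  assumes "continuous_on {0..r} \<psi>" "continuous_on (Icube r) q"
  shows "continuous_on (Icube r) (\<lambda>x. \<psi> (r - Mx x) * q x)"
proof -
  have "continuous_on (Icube r) (\<lambda>x. \<psi> (r - Mx x))"
    by (rule continuous_on_compose2[OF assms(1), of _ "\<lambda>x. r - Mx x"])
       (auto intro!: continuous_intros continuous_on_Mx dest: Mx_in_Icube)
  then show ?thesis using assms(2) by (rule continuous_on_mult)
qed

lemma integrable_indicator_Icube_Int:
  fixes F :: "real^'n::finite \<Rightarrow> real"
  assumes "continuous_on (Icube r) F" "A \<in> sets borel"
  shows "integrable lborel (\<lambda>x. indicator (Icube r \<inter> A) x * F x)"
proof -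
  have "set_integrable lborel (Icube r) F"
    unfolding set_integrable_def by (rule borel_integrable_compact[OF compact_Icube assms(1)])
  then have "set_integrable lborel (Icube r \<inter> A) F"
    by (rule set_integrable_subset) (use assms(2) in auto)
  then show ?thesis by (simp add: set_integrable_def)
qed

text \<open>The points \<open>y\<close> of \<open>lebesgue_minus k\<close> parametrise the lines \<open>t \<mapsto> vec_lambda (y(k := t))\<close>
  parallel to the \<open>k\<close>-th axis.\<close>

definition Mx_except :: "'n::finite \<Rightarrow> ('n \<Rightarrow> real) \<Rightarrow> real" where
  "Mx_except k y = Max ((\<lambda>l. \<bar>y l\<bar>) ` (UNIV - {k}))"

lemma UNIV_minus_singleton_nonempty:
  assumes "CARD('n::finite) \<ge> 2" shows "UNIV - {k::'n} \<noteq> {}"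
proof
  assume "UNIV - {k} = {}"
  then have "(UNIV::'n set) = {k}" by auto
  then have "CARD('n) = card {k}" by (rule arg_cong)
  then show False using assms by simp
qed

lemma abs_le_Mx_except: "l \<noteq> k \<Longrightarrow> \<bar>y l\<bar> \<le> Mx_except k y"
  unfolding Mx_except_def by (rule Max_ge) auto

lemma vec_lambda_fun_upd_eq_line: "vec_lambda (y(k:=t)) = vec_lambda (y(k:=0)) + t *\<^sub>R axis k (1::real)"
  by (auto simp: vec_eq_iff axis_def)

context
  assumes card: "CARD('n::finite) \<ge> 2"
begin

lemma Mx_except_le_iff: "Mx_except k y \<le> c \<longleftrightarrow> (\<forall>l. l \<noteq> (k::'n) \<longrightarrow> \<bar>y l\<bar> \<le> c)"
  unfolding Mx_except_def using UNIV_minus_singleton_nonempty[OF card, of k] by (subst Max_le_iff) auto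

lemma Mx_except_less_iff: "Mx_except k y < c \<longleftrightarrow> (\<forall>l. l \<noteq> (k::'n) \<longrightarrow> \<bar>y l\<bar> < c)"
  unfolding Mx_except_def using UNIV_minus_singleton_nonempty[OF card, of k] by (subst Max_less_iff) auto

lemma Mx_except_attained: "\<exists>l. l \<noteq> (k::'n) \<and> \<bar>y l\<bar> = Mx_except k y"
proof -
  have "Mx_except k y \<in> (\<lambda>l. \<bar>y l\<bar>) ` (UNIV - {k})"
    unfolding Mx_except_def using UNIV_minus_singleton_nonempty[OF card, of k] by (intro Max_in) auto
  then show ?thesis by auto
qed

lemma Mx_except_nonneg: "0 \<le> Mx_except (k::'n) y"
  using Mx_except_attained[of k y] by force

lemma Mx_fun_upd: "Mx (vec_lambda (y(k:=t)) :: real^'n) = max \<bar>t\<bar> (Mx_except k y)"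
proof -
  have "range (\<lambda>i. \<bar>vec_lambda (y(k:=t)) $ i\<bar>) = insert \<bar>t\<bar> ((\<lambda>l. \<bar>y l\<bar>) ` (UNIV - {k}))"
    by (auto simp: image_def)
  then show ?thesis unfolding Mx_def Mx_except_def using UNIV_minus_singleton_nonempty[OF card, of k]
    by (simp add: Max_insert)
qed

lemma fun_upd_in_Icube_iff:
  "(vec_lambda (y(k:=t)) :: real^'n) \<in> Icube r \<longleftrightarrow> \<bar>t\<bar> \<le> r \<and> Mx_except k y \<le> r"
  unfolding Icube_def using Mx_except_le_iff[of k y r] by (auto split: if_splits)

lemma continuous_on_line_Icube:
  fixes F :: "real^'n \<Rightarrow> real"
  assumes "continuous_on (Icube r) F" "Mx_except k y \<le> r"
  shows "continuous_on {-r..r} (\<lambda>t. F (vec_lambda (y(k:=t))))"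
proof (rule continuous_on_compose2[OF assms(1)])
  show "continuous_on {-r..r} (\<lambda>t. vec_lambda (y(k:=t)) :: real^'n)"
    by (subst vec_lambda_fun_upd_eq_line) (intro continuous_intros)
  show "(\<lambda>t. vec_lambda (y(k:=t))) ` {-r..r} \<subseteq> Icube r"
    using assms(2) by (auto simp: fun_upd_in_Icube_iff abs_le_iff)
qed

end

section \<open>Integrating by parts twice along a line\<close>

lemma has_real_derivative_within_shift_reflect:
  assumes "\<forall>s\<in>{0..r}. (f has_real_derivative f' s) (at s within {0..r})"
    and "t \<in> {c..r}" "0 \<le> c"
  shows "((\<lambda>t. f (r - t)) has_real_derivative - f' (r - t)) (at t within {c..r})"
proof -
  have sub: "(\<lambda>t. r - t) ` {c..r} \<subseteq> {0..r}" using assms(3) by auto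
  have "r - t \<in> {0..r}" using assms(2,3) by auto
  then have "(f has_real_derivative f' (r - t)) (at (r - t) within ((\<lambda>t. r - t) ` {c..r}))"
    using assms(1) DERIV_subset[OF _ sub] by blast
  moreover have "((\<lambda>t. r - t) has_real_derivative -1) (at t within {c..r})"
    by (auto intro!: derivative_eq_intros)
  ultimately have "(f \<circ> (\<lambda>t. r - t) has_real_derivative f' (r - t) * -1) (at t within {c..r})"
    by (rule DERIV_image_chain)
  then show ?thesis by (simp add: o_def)
qed

text \<open>The weight \<open>\<psi>\<^sub>0 (r - t)\<close> vanishes to second order at \<open>t = r\<close>, so both integrations by
  parts leave boundary terms only at \<open>t = c\<close>.\<close>

lemma has_integral_parts_twice:
  fixes \<psi>0 \<psi>1 \<psi>2 h h1 h2 :: "real \<Rightarrow> real"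
  assumes c: "0 \<le> c" "c \<le> r"
    and d\<psi>0: "\<forall>t\<in>{0..r}. (\<psi>0 has_real_derivative \<psi>1 t) (at t within {0..r})"
    and d\<psi>1: "\<forall>t\<in>{0..r}. (\<psi>1 has_real_derivative \<psi>2 t) (at t within {0..r})"
    and zero: "\<psi>0 0 = 0" "\<psi>1 0 = 0"
    and dh: "\<forall>t\<in>{c..r}. (h has_real_derivative h1 t) (at t)"
    and dh1: "\<forall>t\<in>{c..r}. (h1 has_real_derivative h2 t) (at t)"
    and ch2: "continuous_on {c..r} h2"
  shows "((\<lambda>t. \<psi>2 (r - t) * h t) has_integral
           integral {c..r} (\<lambda>t. \<psi>0 (r - t) * h2 t) + \<psi>0 (r - c) * h1 c + \<psi>1 (r - c) * h c) {c..r}"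
proof -
  define K where "K t = \<psi>0 (r - t) * h1 t + \<psi>1 (r - t) * h t" for t
  have "((\<lambda>t. \<psi>0 (r - t) * h2 t - \<psi>2 (r - t) * h t) has_integral (K r - K c)) {c..r}"
  proof (rule fundamental_theorem_of_calculus[OF c(2)])
    fix t assume t: "t \<in> {c..r}"
    note d\<psi>0' = has_real_derivative_within_shift_reflect[OF d\<psi>0 t c(1)]
      and d\<psi>1' = has_real_derivative_within_shift_reflect[OF d\<psi>1 t c(1)]
      and dh' = has_field_derivative_at_within[OF dh[rule_format, OF t]]
      and dh1' = has_field_derivative_at_within[OF dh1[rule_format, OF t]]
    have "(K has_real_derivative (\<psi>0 (r - t) * h2 t - \<psi>2 (r - t) * h t)) (at t within {c..r})"
      unfolding K_def
      by (rule DERIV_cong[OF DERIV_add[OF DERIV_mult[OF d\<psi>0' dh1'] DERIV_mult[OF d\<psi>1' dh']]])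
        (simp add: algebra_simps)
    then show "(K has_vector_derivative (\<psi>0 (r - t) * h2 t - \<psi>2 (r - t) * h t)) (at t within {c..r})"
      by (simp add: has_real_derivative_iff_has_vector_derivative)
  qed
  moreover have "K r = 0" by (simp add: K_def zero)
  ultimately have FTC: "((\<lambda>t. \<psi>0 (r - t) * h2 t - \<psi>2 (r - t) * h t) has_integral - K c) {c..r}"
    by simp
  have "continuous_on {0..r} \<psi>0" using d\<psi>0 by (intro DERIV_continuous_on) auto
  then have "continuous_on {c..r} (\<lambda>t. \<psi>0 (r - t))"
    by (rule continuous_on_compose2) (use c in \<open>auto intro!: continuous_intros\<close>)
  then have "continuous_on {c..r} (\<lambda>t. \<psi>0 (r - t) * h2 t)"
    using ch2 by (rule continuous_on_mult)
  then have "((\<lambda>t. \<psi>0 (r - t) * h2 t) has_integral integral {c..r} (\<lambda>t. \<psi>0 (r - t) * h2 t)) {c..r}"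
    using integrable_continuous_interval has_integral_integral by blast
  from has_integral_diff[OF this FTC] show ?thesis by (simp add: K_def algebra_simps)
qed

lemma has_integral_parts_twice_outer:
  fixes \<psi>0 \<psi>1 \<psi>2 h h1 h2 :: "real \<Rightarrow> real"
  assumes c: "0 \<le> c" "c \<le> r"
    and d\<psi>0: "\<forall>t\<in>{0..r}. (\<psi>0 has_real_derivative \<psi>1 t) (at t within {0..r})"
    and d\<psi>1: "\<forall>t\<in>{0..r}. (\<psi>1 has_real_derivative \<psi>2 t) (at t within {0..r})"
    and zero: "\<psi>0 0 = 0" "\<psi>1 0 = 0"
    and dh: "\<forall>t\<in>{c..r}. (h has_real_derivative h1 t) (at t)"
    and dh1: "\<forall>t\<in>{c..r}. (h1 has_real_derivative h2 t) (at t)"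
    and ch2: "continuous_on {c..r} h2"
  shows "(\<lambda>t. \<psi>0 (r - max \<bar>t\<bar> c) * h2 t) integrable_on {c..r}"
    and "((\<lambda>t. if c < \<bar>t\<bar> then \<psi>2 (r - \<bar>t\<bar>) * h t else 0) has_integral
           integral {c..r} (\<lambda>t. \<psi>0 (r - max \<bar>t\<bar> c) * h2 t) + \<psi>0 (r - c) * h1 c + \<psi>1 (r - c) * h c) {c..r}"
proof -
  have weight: "(\<lambda>t. \<psi>0 (r - max \<bar>t\<bar> c) * h2 t) t = \<psi>0 (r - t) * h2 t" if "t \<in> {c..r}" for t
  proof -
    have "max \<bar>t\<bar> c = t" using that c by auto
    then show ?thesis by simp
  qed
  have "continuous_on {0..r} \<psi>0" using d\<psi>0 by (intro DERIV_continuous_on) auto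
  then have "continuous_on {c..r} (\<lambda>t. \<psi>0 (r - t))"
    by (rule continuous_on_compose2) (use c in \<open>auto intro!: continuous_intros\<close>)
  then have "continuous_on {c..r} (\<lambda>t. \<psi>0 (r - t) * h2 t)"
    using ch2 by (rule continuous_on_mult)
  then have "continuous_on {c..r} (\<lambda>t. \<psi>0 (r - max \<bar>t\<bar> c) * h2 t)"
    by (rule continuous_on_eq) (rule weight[symmetric])
  then show "(\<lambda>t. \<psi>0 (r - max \<bar>t\<bar> c) * h2 t) integrable_on {c..r}"
    by (rule integrable_continuous_interval)
  have "integral {c..r} (\<lambda>t. \<psi>0 (r - max \<bar>t\<bar> c) * h2 t) = integral {c..r} (\<lambda>t. \<psi>0 (r - t) * h2 t)"
    using weight by (rule integral_cong)
  then show "((\<lambda>t. if c < \<bar>t\<bar> then \<psi>2 (r - \<bar>t\<bar>) * h t else 0) has_integral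
           integral {c..r} (\<lambda>t. \<psi>0 (r - max \<bar>t\<bar> c) * h2 t) + \<psi>0 (r - c) * h1 c + \<psi>1 (r - c) * h c) {c..r}"
    using has_integral_spike_finite[of "{c}", OF _ _ has_integral_parts_twice[OF c d\<psi>0 d\<psi>1 zero dh dh1 ch2]] c
    by auto
qed

lemma has_integral_parts_twice_outer_left:
  fixes \<psi>0 \<psi>1 \<psi>2 h h1 h2 :: "real \<Rightarrow> real"
  assumes c: "0 \<le> c" "c \<le> r"
    and d\<psi>0: "\<forall>t\<in>{0..r}. (\<psi>0 has_real_derivative \<psi>1 t) (at t within {0..r})"
    and d\<psi>1: "\<forall>t\<in>{0..r}. (\<psi>1 has_real_derivative \<psi>2 t) (at t within {0..r})"
    and zero: "\<psi>0 0 = 0" "\<psi>1 0 = 0"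
    and dh: "\<forall>t\<in>{-r..-c}. (h has_real_derivative h1 t) (at t)"
    and dh1: "\<forall>t\<in>{-r..-c}. (h1 has_real_derivative h2 t) (at t)"
    and ch2: "continuous_on {-r..-c} h2"
  shows "(\<lambda>t. \<psi>0 (r - max \<bar>t\<bar> c) * h2 t) integrable_on {-r..-c}"
    and "((\<lambda>t. if c < \<bar>t\<bar> then \<psi>2 (r - \<bar>t\<bar>) * h t else 0) has_integral
           integral {-r..-c} (\<lambda>t. \<psi>0 (r - max \<bar>t\<bar> c) * h2 t) - \<psi>0 (r - c) * h1 (-c) + \<psi>1 (r - c) * h (-c))
         {-r..-c}"
proof -
  define A where "A t = \<psi>0 (r - max \<bar>t\<bar> c) * h2 t" for t
  define B where "B t = (if c < \<bar>t\<bar> then \<psi>2 (r - \<bar>t\<bar>) * h t else 0)" for t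
  have "((\<lambda>t. h (-t)) has_real_derivative - h1 (-t)) (at t)"
    and "((\<lambda>t. - h1 (-t)) has_real_derivative h2 (-t)) (at t)" if "t \<in> {c..r}" for t
    using that DERIV_chain2[OF dh[rule_format] DERIV_minus[OF DERIV_ident], of t]
      DERIV_minus[OF DERIV_chain2[OF dh1[rule_format] DERIV_minus[OF DERIV_ident], of t]]
    by simp_all
  moreover have "continuous_on {c..r} (\<lambda>t. h2 (-t))"
    by (intro continuous_on_compose2[OF ch2]) (auto intro!: continuous_intros)
  ultimately have "(\<lambda>t. A (-t)) integrable_on {c..r}"
    and "((\<lambda>t. B (-t)) has_integral integral {c..r} (\<lambda>t. A (-t)) - \<psi>0 (r - c) * h1 (-c) + \<psi>1 (r - c) * h (-c)) {c..r}"
    using has_integral_parts_twice_outer[OF c d\<psi>0 d\<psi>1 zero, of "\<lambda>t. h (-t)" "\<lambda>t. - h1 (-t)" "\<lambda>t. h2 (-t)"]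
    unfolding A_def B_def by (auto cong: if_cong)
  moreover have "integral {c..r} (\<lambda>t. A (-t)) = integral {-r..-c} A"
    using Henstock_Kurzweil_Integration.integral_reflect_real[of "-c" "-r" A] by simp
  ultimately show "A integrable_on {-r..-c}"
    and "(B has_integral integral {-r..-c} A - \<psi>0 (r - c) * h1 (-c) + \<psi>1 (r - c) * h (-c)) {-r..-c}"
    using Henstock_Kurzweil_Integration.integrable_reflect_real[where f=A and a="-r" and b="-c"]
      has_integral_reflect_real[where f=B and a="-r" and b="-c"] by simp_all
qed

lemma has_integral_parts_twice_cut:
  fixes \<psi>0 \<psi>1 \<psi>2 h h1 h2 :: "real \<Rightarrow> real"
  assumes c: "0 \<le> c" "c \<le> r"
    and d\<psi>0: "\<forall>t\<in>{0..r}. (\<psi>0 has_real_derivative \<psi>1 t) (at t within {0..r})"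
    and d\<psi>1: "\<forall>t\<in>{0..r}. (\<psi>1 has_real_derivative \<psi>2 t) (at t within {0..r})"
    and zero: "\<psi>0 0 = 0" "\<psi>1 0 = 0"
    and dh: "\<forall>t\<in>{-r..r}. (h has_real_derivative h1 t) (at t)"
    and dh1: "\<forall>t\<in>{-r..r}. (h1 has_real_derivative h2 t) (at t)"
    and ch2: "continuous_on {-r..r} h2"
  shows "((\<lambda>t. \<psi>0 (r - max \<bar>t\<bar> c) * h2 t) has_integral
           integral {-r..r} (\<lambda>t. if c < \<bar>t\<bar> then \<psi>2 (r - \<bar>t\<bar>) * h t else 0) - \<psi>1 (r - c) * (h c + h (-c)))
         {-r..r}"
proof -
  define A where "A t = \<psi>0 (r - max \<bar>t\<bar> c) * h2 t" for t
  define B where "B t = (if c < \<bar>t\<bar> then \<psi>2 (r - \<bar>t\<bar>) * h t else 0)" for t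
  have sub: "{c..r} \<subseteq> {-r..r}" "{-c..c} \<subseteq> {-r..r}" "{-r..-c} \<subseteq> {-r..r}" using c by auto
  note right = has_integral_parts_twice_outer[OF c d\<psi>0 d\<psi>1 zero, of h h1 h2]
    and left = has_integral_parts_twice_outer_left[OF c d\<psi>0 d\<psi>1 zero, of h h1 h2]
  have RA: "(A has_integral integral {c..r} A) {c..r}"
    and RB: "(B has_integral integral {c..r} A + \<psi>0 (r - c) * h1 c + \<psi>1 (r - c) * h c) {c..r}"
    using right dh dh1 continuous_on_subset[OF ch2 sub(1)] sub(1) unfolding A_def B_def by auto
  have LA: "(A has_integral integral {-r..-c} A) {-r..-c}"
    and LB: "(B has_integral integral {-r..-c} A - \<psi>0 (r - c) * h1 (-c) + \<psi>1 (r - c) * h (-c)) {-r..-c}"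
    using left dh dh1 continuous_on_subset[OF ch2 sub(3)] sub(3) unfolding A_def B_def by auto
  have "(h2 has_integral h1 c - h1 (-c)) {-c..c}"
    using c sub(2) dh1
    by (intro fundamental_theorem_of_calculus)
       (auto simp: has_real_derivative_iff_has_vector_derivative[symmetric] intro: has_field_derivative_at_within)
  then have MA: "(A has_integral \<psi>0 (r - c) * (h1 c - h1 (-c))) {-c..c}"
    by (intro has_integral_spike_finite[OF finite.emptyI _ has_integral_mult_right]) (auto simp: A_def max_def)
  have MB: "(B has_integral 0) {-c..c}"
    by (rule has_integral_spike_finite[OF finite.emptyI _ has_integral_0]) (auto simp: B_def)
  have IA: "(A has_integral integral {-r..-c} A + \<psi>0 (r - c) * (h1 c - h1 (-c)) + integral {c..r} A) {-r..r}"
    using c by (intro has_integral_combine[OF _ _ has_integral_combine[OF _ _ LA MA] RA]) auto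
  have IB: "(B has_integral integral {-r..-c} A - \<psi>0 (r - c) * h1 (-c) + \<psi>1 (r - c) * h (-c)
      + 0 + (integral {c..r} A + \<psi>0 (r - c) * h1 c + \<psi>1 (r - c) * h c)) {-r..r}"
    using c by (intro has_integral_combine[OF _ _ has_integral_combine[OF _ _ LB MB] RB]) auto
  \<comment> \<open>the terms with \<open>h1 (\<plusminus>c)\<close> cancel\<close>
  have "integral {-r..r} B - \<psi>1 (r - c) * (h c + h (-c))
      = integral {-r..-c} A + \<psi>0 (r - c) * (h1 c - h1 (-c)) + integral {c..r} A"
    using integral_unique[OF IB] by (simp add: algebra_simps)
  with IA show ?thesis unfolding A_def[abs_def] B_def[abs_def] by simp
qed

section \<open>Integrating \<open>\<partial>\<^sub>k\<^sup>2\<close> along the lines parallel to the \<open>k\<close>-th axis\<close>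

definition dominant_cone :: "'n::finite \<Rightarrow> (real^'n) set" where
  "dominant_cone k = {x. \<forall>l. l \<noteq> k \<longrightarrow> \<bar>x$l\<bar> < \<bar>x$k\<bar>}"

lemma dominant_cone_sets[measurable]: "dominant_cone k \<in> sets borel"
  unfolding dominant_cone_def by measurable

lemma fun_upd_in_dominant_cone_iff:
  assumes "CARD('n::finite) \<ge> 2"
  shows "(vec_lambda (y(k:=t)) :: real^'n) \<in> dominant_cone k \<longleftrightarrow> Mx_except k y < \<bar>t\<bar>"
  using Mx_except_less_iff[OF assms, of k y "\<bar>t\<bar>"] by (auto simp: dominant_cone_def)

lemma lborel_integral_line_Icube_Int:
  fixes F :: "real^'n::finite \<Rightarrow> real"
  assumes card: "CARD('n) \<ge> 2" and F: "continuous_on (Icube r) F" and E: "E \<in> sets borel"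
  shows "(\<integral>t. indicator (Icube r \<inter> E) (vec_lambda (y(k:=t))) * F (vec_lambda (y(k:=t))) \<partial>lborel)
     = indicator {y. Mx_except k y \<le> r} y *
         integral {-r..r} (\<lambda>t. if vec_lambda (y(k:=t)) \<in> E then F (vec_lambda (y(k:=t))) else 0)"
proof (cases "Mx_except k y \<le> r")
  case True
  define f where "f t = F (vec_lambda (y(k:=t)))" for t
  define S where "S = {t. vec_lambda (y(k:=t)) \<in> E}"
  have "(\<lambda>t. vec_lambda (y(k:=t)) :: real^'n) \<in> borel_measurable borel"
    by (subst vec_lambda_fun_upd_eq_line) simp
  then have S: "S \<in> sets borel" unfolding S_def using E by (simp add: measurable_sets_borel)
  have "set_integrable lborel {-r..r} f"
    unfolding set_integrable_def f_def
    by (rule borel_integrable_compact[OF compact_Icc continuous_on_line_Icube[OF card F True]])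
  then have int: "set_integrable lborel (S \<inter> {-r..r}) f"
    by (rule set_integrable_subset) (use S in auto)
  have "(\<integral>t. indicator (Icube r \<inter> E) (vec_lambda (y(k:=t))) * f t \<partial>lborel) = (LINT t : S \<inter> {-r..r} | lborel. f t)"
    unfolding set_lebesgue_integral_def using True
    by (intro Bochner_Integration.integral_cong)
       (auto simp: indicator_def S_def fun_upd_in_Icube_iff[OF card] abs_le_iff)
  also have "\<dots> = integral (S \<inter> {-r..r}) f"
    using set_borel_integral_eq_integral(2)[OF int] .
  also have "\<dots> = integral {-r..r} (\<lambda>t. if t \<in> S then f t else 0)"
    by (rule integral_restrict_Int[symmetric])
  finally show ?thesis using True unfolding f_def S_def by simp
next
  case False
  then show ?thesis by (simp add: indicator_def fun_upd_in_Icube_iff[OF card])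
qed

text \<open>The boundary term left on the line through \<open>y\<close> after integrating by parts twice; the line
  leaves the dominant cone at \<open>t = \<plusminus>Mx_except k y\<close>.\<close>

definition line_boundary_term ::
    "real \<Rightarrow> (real \<Rightarrow> real) \<Rightarrow> (real^'n::finite \<Rightarrow> real) \<Rightarrow> 'n \<Rightarrow> ('n \<Rightarrow> real) \<Rightarrow> real" where
  "line_boundary_term r \<psi> h k y =
     indicator {y. Mx_except k y \<le> r} y *
       (\<psi> (r - Mx_except k y) * (h (vec_lambda (y(k := Mx_except k y))) + h (vec_lambda (y(k := - Mx_except k y)))))"

lemma integral_line_second_partial:
  fixes h :: "real^'n::finite \<Rightarrow> real" and \<psi>0 \<psi>1 \<psi>2 :: "real \<Rightarrow> real"
  assumes card: "CARD('n) \<ge> 2" and sub: "Icube r \<subseteq> U" and hC: "Ck 2 h U"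
    and d\<psi>0: "\<forall>t\<in>{0..r}. (\<psi>0 has_real_derivative \<psi>1 t) (at t within {0..r})"
    and d\<psi>1: "\<forall>t\<in>{0..r}. (\<psi>1 has_real_derivative \<psi>2 t) (at t within {0..r})"
    and zero: "\<psi>0 0 = 0" "\<psi>1 0 = 0"
    and y: "Mx_except k y \<le> r"
  defines "v \<equiv> \<lambda>t. vec_lambda (y(k:=t)) :: real^'n"
  shows "integral {-r..r} (\<lambda>t. \<psi>0 (r - Mx (v t)) * partial k (partial k h) (v t))
       = integral {-r..r} (\<lambda>t. if v t \<in> dominant_cone k then \<psi>2 (r - Mx (v t)) * h (v t) else 0)
         - \<psi>1 (r - Mx_except k y) * (h (v (Mx_except k y)) + h (v (- Mx_except k y)))"
proof -
  define c where "c = Mx_except k y"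
  have c: "0 \<le> c" "c \<le> r" using y Mx_except_nonneg[OF card] by (auto simp: c_def)
  have "Ck (Suc (Suc 0)) h U" using hC by (simp add: numeral_2_eq_2)
  then have dh: "\<forall>x\<in>U. (\<lambda>t. h (x + t *\<^sub>R axis k 1)) differentiable (at 0)"
    and dh1: "\<forall>x\<in>U. (\<lambda>t. partial k h (x + t *\<^sub>R axis k 1)) differentiable (at 0)"
    and ch2: "continuous_on U (partial k (partial k h))"
    by auto
  have v: "v t = v 0 + t *\<^sub>R axis k 1" for t
    unfolding v_def by (rule vec_lambda_fun_upd_eq_line)
  have "v t \<in> U" if "t \<in> {-r..r}" for t
    using sub that y by (auto simp: v_def fun_upd_in_Icube_iff[OF card] abs_le_iff)
  then have "\<forall>t\<in>{-r..r}. ((\<lambda>t. h (v t)) has_real_derivative partial k h (v t)) (at t)"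
    and "\<forall>t\<in>{-r..r}. ((\<lambda>t. partial k h (v t)) has_real_derivative partial k (partial k h) (v t)) (at t)"
    using has_real_derivative_partial_line[OF dh, of "v 0"] has_real_derivative_partial_line[OF dh1, of "v 0"]
    by (simp_all flip: v)
  moreover have "continuous_on {-r..r} (\<lambda>t. partial k (partial k h) (v t))"
    unfolding v_def using continuous_on_subset[OF ch2 sub] y by (rule continuous_on_line_Icube[OF card])
  ultimately have "integral {-r..r} (\<lambda>t. \<psi>0 (r - max \<bar>t\<bar> c) * partial k (partial k h) (v t))
      = integral {-r..r} (\<lambda>t. if c < \<bar>t\<bar> then \<psi>2 (r - \<bar>t\<bar>) * h (v t) else 0) - \<psi>1 (r - c) * (h (v c) + h (v (-c)))"
    by (intro integral_unique has_integral_parts_twice_cut[OF c d\<psi>0 d\<psi>1 zero])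
  moreover have "Mx (v t) = max \<bar>t\<bar> c" and "v t \<in> dominant_cone k \<longleftrightarrow> c < \<bar>t\<bar>" for t
    unfolding v_def c_def by (simp_all add: Mx_fun_upd[OF card] fun_upd_in_dominant_cone_iff[OF card])
  ultimately show ?thesis
    by (simp add: c_def max_def cong: if_cong)
qed

lemma integral_Icube_second_partial:
  fixes h :: "real^'n::finite \<Rightarrow> real" and \<psi>0 \<psi>1 \<psi>2 :: "real \<Rightarrow> real"
  assumes card: "CARD('n) \<ge> 2" and sub: "Icube r \<subseteq> U" and hC: "Ck 2 h U"
    and d\<psi>0: "\<forall>t\<in>{0..r}. (\<psi>0 has_real_derivative \<psi>1 t) (at t within {0..r})"
    and d\<psi>1: "\<forall>t\<in>{0..r}. (\<psi>1 has_real_derivative \<psi>2 t) (at t within {0..r})"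
    and c\<psi>2: "continuous_on {0..r} \<psi>2"
    and zero: "\<psi>0 0 = 0" "\<psi>1 0 = 0"
  shows "integrable (lebesgue_minus k) (line_boundary_term r \<psi>1 h k)"
    and "(LINT x:Icube r|lborel. \<psi>0 (r - Mx x) * partial k (partial k h) x)
          = (LINT x:(Icube r \<inter> dominant_cone k)|lborel. \<psi>2 (r - Mx x) * h x)
            - integral\<^sup>L (lebesgue_minus k) (line_boundary_term r \<psi>1 h k)"
proof -
  have "continuous_on (Icube r) h" "continuous_on (Icube r) (partial k (partial k h))"
    using continuous_on_subset[OF Ck_2_continuous_on(1)[OF hC] sub]
      continuous_on_subset[OF Ck_2_continuous_on(2)[OF hC] sub] by blast+
  moreover have "continuous_on {0..r} \<psi>0" using d\<psi>0 by (intro DERIV_continuous_on) auto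
  ultimately have c0: "continuous_on (Icube r) (\<lambda>x. \<psi>0 (r - Mx x) * partial k (partial k h) x)"
    and c2: "continuous_on (Icube r) (\<lambda>x. \<psi>2 (r - Mx x) * h x)"
    using c\<psi>2 by (auto intro: continuous_on_Icube_radial)
  define F0 where "F0 x = indicator (Icube r \<inter> UNIV) x * (\<psi>0 (r - Mx x) * partial k (partial k h) x)" for x
  define F2 where "F2 x = indicator (Icube r \<inter> dominant_cone k) x * (\<psi>2 (r - Mx x) * h x)" for x
  have UNIV: "UNIV \<in> sets borel" by simp
  have int0: "integrable lborel F0"
    unfolding F0_def by (rule integrable_indicator_Icube_Int[OF c0 UNIV])
  have int2: "integrable lborel F2"
    unfolding F2_def by (rule integrable_indicator_Icube_Int[OF c2 dominant_cone_sets])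
  have slices: "line_boundary_term r \<psi>1 h k y
      = (\<integral>t. F2 (vec_lambda (y(k:=t))) \<partial>lborel) - (\<integral>t. F0 (vec_lambda (y(k:=t))) \<partial>lborel)" for y
    unfolding F0_def F2_def lborel_integral_line_Icube_Int[OF card c0 UNIV] lborel_integral_line_Icube_Int[OF card c2 dominant_cone_sets]
    using integral_line_second_partial[OF card sub hC d\<psi>0 d\<psi>1 zero, of k y]
    by (cases "Mx_except k y \<le> r") (simp_all add: line_boundary_term_def)
  note Fubini0 = lborel_integral_by_coordinate[OF int0, of k]
    and Fubini2 = lborel_integral_by_coordinate[OF int2, of k]
  show "integrable (lebesgue_minus k) (line_boundary_term r \<psi>1 h k)"
    unfolding slices using Fubini0(2) Fubini2(2) by auto
  have "integral\<^sup>L (lebesgue_minus k) (line_boundary_term r \<psi>1 h k) = integral\<^sup>L lborel F2 - integral\<^sup>L lborel F0"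
    unfolding slices Fubini0(1) Fubini2(1) using Fubini0(2) Fubini2(2) by simp
  then show "(LINT x:Icube r|lborel. \<psi>0 (r - Mx x) * partial k (partial k h) x)
          = (LINT x:(Icube r \<inter> dominant_cone k)|lborel. \<psi>2 (r - Mx x) * h x)
            - integral\<^sup>L (lebesgue_minus k) (line_boundary_term r \<psi>1 h k)"
    by (simp add: set_lebesgue_integral_def F0_def[abs_def] F2_def[abs_def])
qed

lemma sum_indicator_dominant_cone:
  fixes x :: "real^'n::finite"
  assumes "\<forall>a b. a \<noteq> b \<longrightarrow> \<bar>x$a\<bar> \<noteq> \<bar>x$b\<bar>"
  shows "(\<Sum>k\<in>UNIV. indicator (dominant_cone k) x) = (1::real)"
proof -
  have "Mx x \<in> range (\<lambda>i. \<bar>x$i\<bar>)" unfolding Mx_def by (rule Max_in) auto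
  then obtain k0 where k0: "\<bar>x$k0\<bar> = Mx x" by auto
  have "x \<in> dominant_cone k \<longleftrightarrow> k = k0" for k
  proof
    assume "x \<in> dominant_cone k"
    then show "k = k0" using k0 abs_le_Mx[of x k] by (force simp: dominant_cone_def)
  next
    assume "k = k0"
    then show "x \<in> dominant_cone k"
      using assms k0 abs_le_Mx[of x] by (force simp: dominant_cone_def order.order_iff_strict)
  qed
  then show ?thesis by (simp add: indicator_def)
qed

lemma sum_integral_dominant_cone:
  fixes F :: "real^'n::finite \<Rightarrow> real"
  assumes F: "continuous_on (Icube r) F"
  shows "(\<Sum>k\<in>UNIV. LINT x:(Icube r \<inter> dominant_cone k)|lborel. F x) = (LINT x:Icube r|lborel. F x)"
proof -
  have int: "integrable lborel (\<lambda>x. indicator (Icube r \<inter> dominant_cone k) x * F x)" for k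
    by (rule integrable_indicator_Icube_Int[OF F dominant_cone_sets])
  have "(\<Sum>k\<in>UNIV. LINT x:(Icube r \<inter> dominant_cone k)|lborel. F x)
      = (\<Sum>k\<in>UNIV. \<integral>x. indicator (Icube r \<inter> dominant_cone k) x * F x \<partial>lborel)"
    by (simp add: set_lebesgue_integral_def)
  also have "\<dots> = (\<integral>x. (\<Sum>k\<in>UNIV. indicator (Icube r \<inter> dominant_cone k) x * F x) \<partial>lborel)"
    by (rule Bochner_Integration.integral_sum[OF int, symmetric])
  also have "\<dots> = (\<integral>x. indicator (Icube r) x * F x \<partial>lborel)"
  proof (rule integral_cong_AE)
    show "AE x in lborel. (\<Sum>k\<in>UNIV. indicator (Icube r \<inter> dominant_cone k) x * F x) = indicator (Icube r) x * F x"
      using AE_lborel_abs_distinct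
    proof (rule eventually_mono)
      fix x :: "real^'n" assume distinct: "\<forall>a b. a \<noteq> b \<longrightarrow> \<bar>x$a\<bar> \<noteq> \<bar>x$b\<bar>"
      have "(\<Sum>k\<in>UNIV. indicator (Icube r \<inter> dominant_cone k) x * F x)
          = indicator (Icube r) x * F x * (\<Sum>k\<in>UNIV. indicator (dominant_cone k) x)"
        by (simp add: indicator_inter_arith sum_distrib_left mult_ac)
      also have "\<dots> = indicator (Icube r) x * F x"
        by (simp add: sum_indicator_dominant_cone[OF distinct])
      finally show "(\<Sum>k\<in>UNIV. indicator (Icube r \<inter> dominant_cone k) x * F x) = indicator (Icube r) x * F x" .
    qed
    show "(\<lambda>x. \<Sum>k\<in>UNIV. indicator (Icube r \<inter> dominant_cone k) x * F x) \<in> borel_measurable lborel"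
      using int by (intro borel_measurable_sum) auto
    show "(\<lambda>x. indicator (Icube r) x * F x) \<in> borel_measurable lborel"
      using integrable_indicator_Icube_Int[OF F, of UNIV] by auto
  qed
  finally show ?thesis by (simp add: set_lebesgue_integral_def)
qed

section \<open>The boundary terms as integrals over \<open>D\<^sub>n\<close>\<close>

lemma lift_nth[simp]: "lift i j \<sigma> y $ l = (if l = i then \<sigma> * y j else y l)"
  by (simp add: lift_def)

lemma lift_eq_vec_lambda: "lift i j \<sigma> y = vec_lambda (y(i := \<sigma> * y j))"
  by (auto simp: vec_eq_iff)

lemma measurable_lift[measurable]:
  assumes "j \<noteq> i"
  shows "lift i j \<sigma> \<in> borel_measurable (lebesgue_minus i)"
proof -
  have "(\<lambda>y. if l = i then \<sigma> * y j else y l) \<in> borel_measurable (PiM (UNIV - {i}) (\<lambda>_. lborel))" for l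
    using assms by (cases "l = i") simp_all
  then have "(\<lambda>y. vec_lambda (\<lambda>l. if l = i then \<sigma> * y j else y l) :: real^'a)
      \<in> borel_measurable (PiM (UNIV - {i}) (\<lambda>_. lborel))"
    by (rule measurable_vec_lambda)
  moreover have "lift i j \<sigma> = (\<lambda>y. vec_lambda (\<lambda>l. if l = i then \<sigma> * y j else y l))"
    by (auto simp: vec_eq_iff)
  ultimately show ?thesis by (simp add: lebesgue_minus_def)
qed

lemma integrable_lift_Dij:
  fixes H :: "real^'n::finite \<Rightarrow> real"
  assumes ji: "j \<noteq> i" and H: "continuous_on (Icube r) H" and r: "r > 0"
  shows "integrable (lebesgue_minus i) (\<lambda>y. indicator (Dij r i j) (lift i j \<sigma> y) * H (lift i j \<sigma> y))"
proof -
  interpret product_sigma_finite "\<lambda>_::'n. lborel :: real measure" by standard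
  obtain B where B: "\<forall>x\<in>Icube r. \<bar>H x\<bar> \<le> B" "B > 0"
    using compact_imp_bounded[OF compact_continuous_image[OF H compact_Icube]] unfolding bounded_pos by force
  define A where "A = PiE (UNIV - {i}) (\<lambda>_. {-r..r})"
  have A: "A \<in> sets (lebesgue_minus i)" unfolding A_def lebesgue_minus_def
    by (rule sets_PiM_I_finite) auto
  have "emeasure (lebesgue_minus i) A = (\<Prod>l\<in>UNIV - {i}. ennreal (2 * r))"
    unfolding A_def lebesgue_minus_def using r by (subst emeasure_PiM) auto
  then have "emeasure (lebesgue_minus i) A < \<infinity>"
    using r by (simp add: prod_ennreal ennreal_power)
  moreover define Z where "Z x = indicator (Dij r i j) x * (indicator (Icube r) x * H x)" for x
  have "(\<lambda>x. indicator (Icube r) x *\<^sub>R H x) \<in> borel_measurable borel"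
    by (rule borel_measurable_continuous_on_indicator[OF Icube_sets H])
  then have "Z \<in> borel_measurable borel" unfolding Z_def[abs_def] by simp
  then have "(\<lambda>y. Z (lift i j \<sigma> y)) \<in> borel_measurable (lebesgue_minus i)"
    using measurable_lift[OF ji] by measurable
  moreover have "lift i j \<sigma> y \<notin> Icube r" if "y \<in> space (lebesgue_minus i)" "y \<notin> A" for y
    using that by (auto simp: A_def lebesgue_minus_def space_PiM PiE_iff Icube_def abs_le_iff)
  ultimately have "integrable (lebesgue_minus i) (\<lambda>y. Z (lift i j \<sigma> y))"
    using A B Dij_subset_Icube[of r i j]
    by (intro integrableI_bounded_set[where A=A and B=B]) (auto simp: Z_def indicator_def)
  moreover have "indicator (Dij r i j) x * H x = Z x" for x
    using Dij_subset_Icube[of r i j] by (auto simp: Z_def indicator_def)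
  ultimately show ?thesis by simp
qed

lemma lift_in_Dij_iff:
  assumes card: "CARD('n::finite) \<ge> 2" and ji: "j \<noteq> (i::'n)" and \<sigma>: "\<bar>\<sigma>\<bar> = 1"
  shows "lift i j \<sigma> y \<in> Dij r i j \<longleftrightarrow> Mx_except i y \<le> r \<and> \<bar>y j\<bar> = Mx_except i y"
proof -
  have lift_i: "\<bar>lift i j \<sigma> y $ i\<bar> = \<bar>y j\<bar>" using \<sigma> by (simp add: abs_mult)
  have "lift i j \<sigma> y \<in> Dij r i j \<longleftrightarrow> (\<forall>l. l \<noteq> i \<longrightarrow> \<bar>y l\<bar> \<le> r) \<and> (\<forall>l. l \<noteq> i \<longrightarrow> \<bar>y l\<bar> \<le> \<bar>y j\<bar>)"
    using ji lift_i by (auto simp: Dij_def Icube_def)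
  also have "\<dots> \<longleftrightarrow> Mx_except i y \<le> r \<and> \<bar>y j\<bar> = Mx_except i y"
    using ji abs_le_Mx_except[of _ i y] Mx_except_le_iff[OF card, of i y "\<bar>y j\<bar>"]
      Mx_except_le_iff[OF card, of i y r]
    by (auto intro: order.antisym)
  finally show ?thesis .
qed

lemma integral_Dij_eq_indicator:
  "integral_Dij r i j H = (\<Sum>\<sigma>\<in>{-1, 1::real}.
      \<integral>y. indicator (Dij r i j) (lift i j \<sigma> y) * H (lift i j \<sigma> y) \<partial>lebesgue_minus i)"
  unfolding integral_Dij_def set_lebesgue_integral_def
  by (intro sum.cong refl Bochner_Integration.integral_cong) (auto simp: indicator_def)

text \<open>The two sheets \<open>x\<^sub>i = \<plusminus>x\<^sub>j\<close> of \<open>D\<^sub>i\<^sub>j\<close> over \<open>y\<close> are the two endpoints \<open>t = \<plusminus>Mx_except i y\<close>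
  of the line through \<open>y\<close>, provided \<open>x\<^sub>j\<close> realises \<open>Mx_except i y\<close>.\<close>

lemma sum_sheets_Dij:
  fixes h :: "real^'n::finite \<Rightarrow> real"
  assumes card: "CARD('n) \<ge> 2" and ji: "j \<noteq> i"
  shows "(\<Sum>\<sigma>\<in>{-1, 1::real}. indicator (Dij r i j) (lift i j \<sigma> y) * (\<psi> (r - Mx (lift i j \<sigma> y)) * h (lift i j \<sigma> y)))
       = indicator {y. \<bar>y j\<bar> = Mx_except i y} y * line_boundary_term r \<psi> h i y"
proof (cases "Mx_except i y \<le> r \<and> \<bar>y j\<bar> = Mx_except i y")
  case True
  define a where "a = Mx_except i y"
  have "lift i j \<sigma> y \<in> Dij r i j" and "Mx (lift i j \<sigma> y) = a" if "\<bar>\<sigma>\<bar> = 1" for \<sigma>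
    using True that lift_in_Dij_iff[OF card ji that, of y r]
    by (simp_all add: a_def lift_eq_vec_lambda Mx_fun_upd[OF card] abs_mult)
  then have "(\<Sum>\<sigma>\<in>{-1, 1::real}. indicator (Dij r i j) (lift i j \<sigma> y) * (\<psi> (r - Mx (lift i j \<sigma> y)) * h (lift i j \<sigma> y)))
      = \<psi> (r - a) * (h (lift i j (-1) y) + h (lift i j 1 y))"
    by (simp add: algebra_simps)
  also have "h (lift i j (-1) y) + h (lift i j 1 y) = h (vec_lambda (y(i := a))) + h (vec_lambda (y(i := - a)))"
  proof -
    have "y j = a \<or> y j = - a" using True unfolding a_def by linarith
    then show ?thesis unfolding lift_eq_vec_lambda by auto
  qed
  finally show ?thesis
    using True by (simp add: line_boundary_term_def a_def)
next
  case False
  then have "lift i j \<sigma> y \<notin> Dij r i j" if "\<bar>\<sigma>\<bar> = 1" for \<sigma>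
    using lift_in_Dij_iff[OF card ji that, of y r] by blast
  then show ?thesis
    using False by (simp add: line_boundary_term_def indicator_def)
qed

lemma AE_sum_indicator_argmax_except:
  assumes card: "CARD('n::finite) \<ge> 2"
  shows "AE y in lebesgue_minus (i::'n). (\<Sum>j\<in>UNIV-{i}. indicator {y. \<bar>y j\<bar> = Mx_except i y} y) = (1::real)"
proof -
  have "AE y in lebesgue_minus i. \<forall>a\<in>UNIV-{i}. \<forall>b\<in>UNIV-{i}. a \<noteq> b \<longrightarrow> \<bar>y a\<bar> \<noteq> \<bar>y b\<bar>"
    unfolding lebesgue_minus_def by (rule AE_PiM_abs_distinct) simp
  then show ?thesis
  proof (rule eventually_mono)
    fix y :: "'n \<Rightarrow> real" assume distinct: "\<forall>a\<in>UNIV-{i}. \<forall>b\<in>UNIV-{i}. a \<noteq> b \<longrightarrow> \<bar>y a\<bar> \<noteq> \<bar>y b\<bar>"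
    obtain j0 where j0: "j0 \<noteq> i" "\<bar>y j0\<bar> = Mx_except i y" using Mx_except_attained[OF card] by blast
    then have "\<bar>y j\<bar> = Mx_except i y \<longleftrightarrow> j = j0" if "j \<in> UNIV - {i}" for j
      using distinct that by force
    then show "(\<Sum>j\<in>UNIV-{i}. indicator {y. \<bar>y j\<bar> = Mx_except i y} y) = (1::real)"
      using j0(1) by (simp add: indicator_def sum.If_cases)
  qed
qed

lemma integral_line_boundary_term_eq_sum_Dij:
  fixes h :: "real^'n::finite \<Rightarrow> real"
  assumes card: "CARD('n) \<ge> 2" and r: "r > 0"
    and H: "continuous_on (Icube r) (\<lambda>x. \<psi> (r - Mx x) * h x)"
    and G: "integrable (lebesgue_minus i) (line_boundary_term r \<psi> h i)"
  shows "integral\<^sup>L (lebesgue_minus i) (line_boundary_term r \<psi> h i)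
       = (\<Sum>j\<in>UNIV-{i}. integral_Dij r i j (\<lambda>x. \<psi> (r - Mx x) * h x))"
proof -
  define T where "T j \<sigma> y = indicator (Dij r i j) (lift i j \<sigma> y) * (\<psi> (r - Mx (lift i j \<sigma> y)) * h (lift i j \<sigma> y))"
    for j \<sigma> y
  define S where "S j y = indicator {y. \<bar>y j\<bar> = Mx_except i y} y * line_boundary_term r \<psi> h i y" for j y
  have intT: "integrable (lebesgue_minus i) (T j \<sigma>)" if "j \<in> UNIV - {i}" for j \<sigma>
    unfolding T_def[abs_def] using integrable_lift_Dij[OF _ H r] that by auto
  have TS: "(\<lambda>y. \<Sum>\<sigma>\<in>{-1, 1::real}. T j \<sigma> y) = S j" if "j \<in> UNIV - {i}" for j
    using sum_sheets_Dij[OF card] that unfolding T_def S_def by auto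
  have intS: "integrable (lebesgue_minus i) (S j)" if "j \<in> UNIV - {i}" for j
  proof -
    have "integrable (lebesgue_minus i) (\<lambda>y. \<Sum>\<sigma>\<in>{-1, 1::real}. T j \<sigma> y)"
      using intT[OF that] by auto
    then show ?thesis using TS[OF that] by simp
  qed
  have "(\<Sum>j\<in>UNIV-{i}. integral_Dij r i j (\<lambda>x. \<psi> (r - Mx x) * h x))
      = (\<Sum>j\<in>UNIV-{i}. \<Sum>\<sigma>\<in>{-1, 1::real}. integral\<^sup>L (lebesgue_minus i) (T j \<sigma>))"
    by (simp add: integral_Dij_eq_indicator T_def[abs_def])
  also have "\<dots> = (\<Sum>j\<in>UNIV-{i}. integral\<^sup>L (lebesgue_minus i) (S j))"
    using intT by (auto intro!: sum.cong simp flip: TS)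
  also have "\<dots> = integral\<^sup>L (lebesgue_minus i) (\<lambda>y. \<Sum>j\<in>UNIV-{i}. S j y)"
    by (rule Bochner_Integration.integral_sum[symmetric]) (rule intS)
  also have "\<dots> = integral\<^sup>L (lebesgue_minus i) (line_boundary_term r \<psi> h i)"
  proof (rule integral_cong_AE)
    show "(\<lambda>y. \<Sum>j\<in>UNIV-{i}. S j y) \<in> borel_measurable (lebesgue_minus i)"
      using intS by (intro borel_measurable_sum) auto
    show "AE y in lebesgue_minus i. (\<Sum>j\<in>UNIV-{i}. S j y) = line_boundary_term r \<psi> h i y"
      using AE_sum_indicator_argmax_except[OF card, of i]
      by (rule eventually_mono) (simp add: S_def flip: sum_distrib_right)
  qed (use G in auto)
  finally show ?thesis ..
qed

lemma lborel_integral_lift_swap: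
  fixes Z :: "real^'n::finite \<Rightarrow> real"
  assumes ij: "i \<noteq> j" and \<sigma>: "\<bar>\<sigma>\<bar> = 1"
  shows "(\<integral>t. Z (lift i j \<sigma> (w(j:=t))) \<partial>lborel) = (\<integral>t. Z (lift j i \<sigma> (w(i:=t))) \<partial>lborel)"
proof (cases "\<sigma> = 1")
  case True
  moreover have "lift i j 1 (w(j:=t)) = lift j i 1 (w(i:=t))" for t
    using ij by (auto simp: vec_eq_iff)
  ultimately show ?thesis by simp
next
  case False
  then have "\<sigma> = -1" using \<sigma> by auto
  \<comment> \<open>on the sheet \<open>x\<^sub>i = -x\<^sub>j\<close> the two parametrisations differ by the reflection \<open>t \<mapsto> -t\<close>\<close>
  moreover have "(\<integral>t. Z (lift i j (-1) (w(j:=t))) \<partial>lborel) = (\<integral>t. Z (lift i j (-1) (w(j:= -t))) \<partial>lborel)"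
    using lborel_integral_real_affine[where c="-1" and t=0, of "\<lambda>t. Z (lift i j (-1) (w(j:=t)))"] by simp
  moreover have "lift i j (-1) (w(j:= -t)) = lift j i (-1) (w(i:=t))" for t
    using ij by (auto simp: vec_eq_iff)
  ultimately show ?thesis by simp
qed

lemma integral_Dij_commute:
  fixes H :: "real^'n::finite \<Rightarrow> real"
  assumes ij: "i \<noteq> j" and H: "continuous_on (Icube r) H" and r: "r > 0"
  shows "integral_Dij r i j H = integral_Dij r j i H"
proof -
  interpret product_sigma_finite "\<lambda>_::'n. lborel :: real measure" by standard
  define W where "W = UNIV - {i} - {j}"
  have Wi: "UNIV - {i} = insert j W" "j \<notin> W" and Wj: "UNIV - {j} = insert i W" "i \<notin> W"
    using ij by (auto simp: W_def)
  have slices: "(\<integral>y. indicator (Dij r i j) (lift i j \<sigma> y) * H (lift i j \<sigma> y) \<partial>lebesgue_minus i)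
      = (\<integral>w. (\<integral>t. indicator (Dij r i j) (lift i j \<sigma> (w(j:=t))) * H (lift i j \<sigma> (w(j:=t))) \<partial>lborel)
          \<partial>PiM W (\<lambda>_. lborel))"
    if "i \<noteq> j" and W: "UNIV - {i} = insert j W" "j \<notin> W" for i j :: 'n and \<sigma>
  proof -
    have "integrable (PiM (insert j W) (\<lambda>_. lborel))
        (\<lambda>y. indicator (Dij r i j) (lift i j \<sigma> y) * H (lift i j \<sigma> y))"
      using integrable_lift_Dij[OF _ H r, of j i \<sigma>] that unfolding lebesgue_minus_def by simp
    from product_integral_insert[OF _ W(2) this] show ?thesis
      unfolding lebesgue_minus_def W(1) by simp
  qed
  have "(\<integral>y. indicator (Dij r i j) (lift i j \<sigma> y) * H (lift i j \<sigma> y) \<partial>lebesgue_minus i)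
      = (\<integral>y. indicator (Dij r j i) (lift j i \<sigma> y) * H (lift j i \<sigma> y) \<partial>lebesgue_minus j)"
    if "\<bar>\<sigma>\<bar> = 1" for \<sigma>
    using slices[OF ij Wi] slices[OF ij[symmetric] Wj]
      lborel_integral_lift_swap[OF ij that, of "\<lambda>x. indicator (Dij r i j) x * H x"]
    by (simp add: Dij_commute)
  then show ?thesis
    by (simp add: integral_Dij_eq_indicator)
qed

lemma sum_offdiag_eq_twice_sum_upper:
  fixes f :: "'n::{finite,linorder} \<Rightarrow> 'n \<Rightarrow> 'a::comm_monoid_add"
  assumes sym: "\<And>k j. k \<noteq> j \<Longrightarrow> f k j = f j k"
  shows "(\<Sum>k\<in>UNIV. \<Sum>j\<in>UNIV-{k}. f k j) = (\<Sum>k\<in>UNIV. \<Sum>j\<in>{j. k<j}. f k j) + (\<Sum>k\<in>UNIV. \<Sum>j\<in>{j. k<j}. f k j)"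
proof -
  have "(\<Sum>j\<in>UNIV-{k}. f k j) = (\<Sum>j\<in>{j. k<j}. f k j) + (\<Sum>j\<in>{j. j<k}. f k j)" for k
  proof -
    have "UNIV - {k} = {j. k<j} \<union> {j. j<k}" by auto
    moreover have "sum (f k) ({j. k<j} \<union> {j. j<k}) = (\<Sum>j\<in>{j. k<j}. f k j) + (\<Sum>j\<in>{j. j<k}. f k j)"
      by (rule sum.union_disjoint) auto
    ultimately show ?thesis by simp
  qed
  moreover have "(\<Sum>k\<in>UNIV. \<Sum>j\<in>{j. j<k}. f k j) = (\<Sum>j\<in>UNIV. \<Sum>k\<in>{k. j<k}. f k j)"
    using sum.swap_restrict[of "UNIV::'n set" UNIV f "\<lambda>k j. j < k"] by simp
  ultimately show ?thesis
    using sym by (simp add: sum.distrib)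
qed

section \<open>The Green-type identity and its iteration\<close>

lemma green_identity_Icube:
  fixes h :: "real^'n::{finite,linorder} \<Rightarrow> real" and \<psi>0 \<psi>1 \<psi>2 :: "real \<Rightarrow> real"
  assumes card: "CARD('n) \<ge> 2" and r: "r > 0" and sub: "Icube r \<subseteq> U" and hC: "Ck 2 h U"
    and d\<psi>0: "\<forall>t\<in>{0..r}. (\<psi>0 has_real_derivative \<psi>1 t) (at t within {0..r})"
    and d\<psi>1: "\<forall>t\<in>{0..r}. (\<psi>1 has_real_derivative \<psi>2 t) (at t within {0..r})"
    and c\<psi>2: "continuous_on {0..r} \<psi>2"
    and zero: "\<psi>0 0 = 0" "\<psi>1 0 = 0"
  shows "(LINT x:Icube r|lborel. \<psi>2 (r - Mx x) * h x)
       = (LINT x:Icube r|lborel. \<psi>0 (r - Mx x) * laplacian h x) + 2 * integral_Dn r (\<lambda>x. \<psi>1 (r - Mx x) * h x)"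
proof -
  define H where "H x = \<psi>1 (r - Mx x) * h x" for x
  have ch: "continuous_on (Icube r) h" and ch2: "continuous_on (Icube r) (partial k (partial k h))" for k
    using continuous_on_subset[OF Ck_2_continuous_on(1)[OF hC] sub]
      continuous_on_subset[OF Ck_2_continuous_on(2)[OF hC] sub] by blast+
  have "continuous_on {0..r} \<psi>0" "continuous_on {0..r} \<psi>1"
    using d\<psi>0 d\<psi>1 by (auto intro!: DERIV_continuous_on)
  then have cH: "continuous_on (Icube r) H"
    and c0: "continuous_on (Icube r) (\<lambda>x. \<psi>0 (r - Mx x) * partial k (partial k h) x)"
    and c2: "continuous_on (Icube r) (\<lambda>x. \<psi>2 (r - Mx x) * h x)" for k
    unfolding H_def[abs_def] using ch ch2 c\<psi>2 by (auto intro: continuous_on_Icube_radial)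
  note second_partial = integral_Icube_second_partial[OF card sub hC d\<psi>0 d\<psi>1 c\<psi>2 zero]
  have "(LINT x:Icube r|lborel. \<psi>0 (r - Mx x) * laplacian h x)
      = (\<integral>x. (\<Sum>k\<in>UNIV. indicator (Icube r \<inter> UNIV) x * (\<psi>0 (r - Mx x) * partial k (partial k h) x)) \<partial>lborel)"
    unfolding set_lebesgue_integral_def laplacian_def by (simp add: sum_distrib_left)
  also have "\<dots> = (\<Sum>k\<in>UNIV. \<integral>x. indicator (Icube r \<inter> UNIV) x * (\<psi>0 (r - Mx x) * partial k (partial k h) x) \<partial>lborel)"
    by (rule Bochner_Integration.integral_sum) (rule integrable_indicator_Icube_Int[OF c0], simp)
  also have "\<dots> = (\<Sum>k\<in>UNIV. LINT x:Icube r|lborel. \<psi>0 (r - Mx x) * partial k (partial k h) x)"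
    by (simp add: set_lebesgue_integral_def)
  also have "\<dots> = (LINT x:Icube r|lborel. \<psi>2 (r - Mx x) * h x)
      - (\<Sum>k\<in>UNIV. integral\<^sup>L (lebesgue_minus k) (line_boundary_term r \<psi>1 h k))"
    by (simp add: second_partial(2) sum_subtractf sum_integral_dominant_cone[OF c2])
  also have "(\<Sum>k\<in>UNIV. integral\<^sup>L (lebesgue_minus k) (line_boundary_term r \<psi>1 h k))
      = (\<Sum>k\<in>UNIV. \<Sum>j\<in>UNIV-{k}. integral_Dij r k j H)"
    using integral_line_boundary_term_eq_sum_Dij[OF card r _ second_partial(1)] cH
    unfolding H_def[abs_def] by simp
  also have "\<dots> = 2 * integral_Dn r H"
    unfolding integral_Dn_def mult_2
    by (rule sum_offdiag_eq_twice_sum_upper) (rule integral_Dij_commute[OF _ cH r])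
  finally show ?thesis unfolding H_def[abs_def] by simp
qed

lemma green_identity_Icube_iterated:
  fixes g :: "real^'n::{finite,linorder} \<Rightarrow> real" and \<Phi> :: "nat \<Rightarrow> real \<Rightarrow> real"
  assumes card: "CARD('n) \<ge> 2" and r: "r > 0" and U: "open U" "Icube r \<subseteq> U"
    and gC: "Ck (2*m) g U"
    and d\<Phi>: "\<forall>k<2*m. \<forall>t\<in>{0..r}. (\<Phi> k has_real_derivative \<Phi> (Suc k) t) (at t within {0..r})"
    and c\<Phi>: "continuous_on {0..r} (\<Phi> (2*m))"
    and zero: "\<forall>k<2*m. \<Phi> k 0 = 0"
    and "d \<le> m"
  shows "(LINT x:Icube r|lborel. \<Phi> (2*d) (r - Mx x) * (laplacian ^^ (m - d)) g x)
       = (LINT x:Icube r|lborel. \<Phi> 0 (r - Mx x) * (laplacian ^^ m) g x)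
         + 2 * (\<Sum>s<d. integral_Dn r (\<lambda>x. \<Phi> (2 * s + 1) (r - Mx x) * (laplacian ^^ (m-s-1)) g x))"
  using \<open>d \<le> m\<close>
proof (induction d)
  case (Suc d)
  define h where "h = (laplacian ^^ (m - d - 1)) g"
  have "Ck (2 * (m - (m - d - 1))) h U"
    unfolding h_def by (rule Ck_laplacian_funpow[OF U(1) gC]) simp
  then have hC: "Ck 2 h U" by (rule Ck_mono[rotated]) (use Suc.prems in simp)
  have "2*d < 2*m" "2*d + 1 < 2*m" using Suc.prems by auto
  then have d0: "\<forall>t\<in>{0..r}. (\<Phi> (2*d) has_real_derivative \<Phi> (2*d + 1) t) (at t within {0..r})"
    and d1: "\<forall>t\<in>{0..r}. (\<Phi> (2*d + 1) has_real_derivative \<Phi> (2*d + 2) t) (at t within {0..r})"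
    using d\<Phi>[rule_format, of "2*d"] d\<Phi>[rule_format, of "2*d + 1"] by simp_all
  have c2: "continuous_on {0..r} (\<Phi> (2*d + 2))"
  proof (cases "Suc d = m")
    case False
    then have "\<forall>t\<in>{0..r}. (\<Phi> (2*d + 2) has_real_derivative \<Phi> (Suc (2*d + 2)) t) (at t within {0..r})"
      using d\<Phi> Suc.prems by auto
    then show ?thesis by (intro DERIV_continuous_on) auto
  next
    case True
    then have "2*d + 2 = 2*m" by simp
    then show ?thesis using c\<Phi> by simp
  qed
  have "m - d = Suc (m - d - 1)" using Suc.prems by simp
  then have "laplacian h = (laplacian ^^ (m - d)) g"
    unfolding h_def by (metis comp_apply funpow.simps(2))
  moreover have "\<Phi> (2*d) 0 = 0" "\<Phi> (2*d + 1) 0 = 0" using zero Suc.prems by auto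
  ultimately have "(LINT x:Icube r|lborel. \<Phi> (2*d + 2) (r - Mx x) * h x)
      = (LINT x:Icube r|lborel. \<Phi> (2*d) (r - Mx x) * (laplacian ^^ (m - d)) g x)
        + 2 * integral_Dn r (\<lambda>x. \<Phi> (2*d + 1) (r - Mx x) * h x)"
    using green_identity_Icube[OF card r U(2) hC d0 d1 c2] by simp
  then show ?case
    using Suc by (simp add: h_def algebra_simps)
qed simp

theorem theorem2:
  fixes g :: "real^'n::{finite,linorder} \<Rightarrow> real"
    and U :: "(real^'n::{finite,linorder}) set"
    and r :: real and m :: nat
    and \<phi> :: "real \<Rightarrow> real" and \<Phi> :: "nat \<Rightarrow> real \<Rightarrow> real"
  assumes "CARD('n) \<ge> 2" and "r > 0" and "m \<ge> 1"
    and "open U" and "connected U" and "Icube r \<subseteq> U"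
    and "Ck (2*m) g U"
    and "\<forall>x\<in>U. (laplacian ^^ m) g x = 0"
    and "\<Phi> 0 = \<phi>"
    and "\<forall>k<2*m. \<forall>t\<in>{0..r}. (\<Phi> k has_real_derivative \<Phi> (Suc k) t) (at t within {0..r})"
    and "continuous_on {0..r} (\<Phi> (2*m))"
    and "\<forall>k<2*m. \<Phi> k 0 = 0"
  shows "(LINT x : Icube r | lborel. \<Phi> (2*m) (r - Mx x) * g x)
       = 2 * (\<Sum>s<m. integral_Dn r (\<lambda>x. \<Phi> (2 * s + 1) (r - Mx x) * (laplacian ^^ (m-s-1)) g x))"
proof -
  have "(\<lambda>x. indicator (Icube r) x *\<^sub>R (\<Phi> 0 (r - Mx x) * (laplacian ^^ m) g x)) = (\<lambda>x. 0)"
    using assms(6,8) by (auto simp: indicator_def fun_eq_iff)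
  then have "(LINT x : Icube r | lborel. \<Phi> 0 (r - Mx x) * (laplacian ^^ m) g x) = 0"
    by (simp add: set_lebesgue_integral_def)
  then show ?thesis
    using green_identity_Icube_iterated[OF assms(1,2,4,6,7,10,11,12) order.refl] by simp
qed

end
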